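(* Let $\mathcal{M}$ be the set of all marked overpartitions. There is a bijection $\Phi:\mathcal{M}\to\overline{SP}$ which preserves weight (if $(\pi,j)$ is a marked overpartition of $n$ then $|\Phi(\pi,j)|=n$) and satisfies, for every $(\pi,j)\in\mathcal M$ with $\vec\lambda=\Phi(\pi,j)$, \[ \bar k(\pi,j)=k(\vec\lambda)\qquad\text{and}\qquad\overline{\mathrm{sptcrank}}(\pi,j)=\overline{\mathrm{crank}}(\vec\lambda). \]
   Context: For a partition $\lambda$, $s(\lambda)$ is its smallest part ($s(\emptyset)=\infty$) and $|\lambda|$ its sum. Marked overpartitions: an overpartition of $n$ is a partition of $n$ in which the first occurrence of each part size may be overlined; a marked overpartition of $n$ is a pair $(\pi,j)$ where $\pi$ is an overpartition of $n$ whose smallest part is not overlined and $1\le j\le\nu(\pi)$, $\nu(\pi)$ the number of occurrences of the smallest part. Let $\pi_1$ be the partition of non-overlined parts and $\pi_2$ the partition (into distinct parts) of overlined parts. For a positive integer $m=b(m)2^{j(m)}$ with $b(m)$ odd and integers $m\ge n+1$, let $j_0(m,n)$ be the least nonnegative $j_0$ with $b(m)2^{j_0}\ge n+1$; $k(m,n)=0$ if $b(m)\ge2n$, $k(m,n)=2^{j(m)-j_0(m,n)}$ if $b(m)2^{j_0(m,n)}<2n$, $k(m,n)=0$ if $b(m)2^{j_0(m,n)}=2n$; and $k(\rho,n)=\sum_{m\in\rho}k(m,n)$ for $\rho$ into distinct parts $\ge n+1$. Set $\bar k(\pi,j)=\nu(\pi_1)-j+k(\pi_2,s(\pi_1))$,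 and $\overline{\mathrm{sptcrank}}(\pi,j)$ = (number of parts of $\pi_1$ that are $\ge s(\pi_1)+\bar k$) $-\bar k$ if $\bar k>0$, = (number of parts of $\pi_1$) $-1$ if $\bar k=0$. $\overline{SP}$ is the set of pairs $\vec\lambda=(\lambda_1,\lambda_2)$ of partitions with $0<s(\lambda_1)\le s(\lambda_2)$ such that every part of $\lambda_2$ that is $\ge2s(\lambda_1)+1$ is odd; $|\vec\lambda|=|\lambda_1|+|\lambda_2|$. $k(\vec\lambda)$ is the number of parts $j$ of $\lambda_2$ (with multiplicity) with $s(\lambda_1)\le j\le2s(\lambda_1)-1$; with $k=k(\vec\lambda)$, $\overline{\mathrm{crank}}(\vec\lambda)$ = (number of parts of $\lambda_1$ that are $\ge s(\lambda_1)+k$) $-k$ if $k>0$, = (number of parts of $\lambda_1$) $-1$ if $k=0$. *)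

theory Defs
  imports "HOL-Library.Multiset" "HOL-Computational_Algebra.Primes"
begin

definition is_partition :: "nat multiset \<Rightarrow> bool" where
  "is_partition lam \<longleftrightarrow> (\<forall>x\<in>#lam. 0 < x)"

definition spart :: "nat multiset \<Rightarrow> nat" where
  "spart lam = Min (set_mset lam)"

text \<open>A marked overpartition is encoded as a triple (pi1, pi2, j): pi1 is the
partition of non-overlined parts, pi2 the (finite) set of overlined parts (distinct),
and j the mark. The smallest part of pi is not overlined: pi1 is nonempty and every
overlined part exceeds the smallest non-overlined part.\<close>

type_synonym marked_op = "nat multiset \<times> nat set \<times> nat"

definition marked_overpartitions :: "marked_op set" where
  "marked_overpartitions =
     {(p1, p2, j). is_partition p1 \<and> p1 \<noteq> {#} \<and> finite p2 \<and>
        (\<forall>x\<in>p2. spart p1 < x) \<and> 1 \<le> j \<and> j \<le> count p1 (spart p1)}"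

definition mop_weight :: "marked_op \<Rightarrow> nat" where
  "mop_weight x = (case x of (p1, p2, j) \<Rightarrow> sum_mset p1 + \<Sum>p2)"

text \<open>m = b(m) 2^j(m) with b(m) odd.\<close>

definition jpow :: "nat \<Rightarrow> nat" where
  "jpow m = multiplicity (2::nat) m"

definition bodd :: "nat \<Rightarrow> nat" where
  "bodd m = m div 2 ^ jpow m"

definition j0 :: "nat \<Rightarrow> nat \<Rightarrow> nat" where
  "j0 m n = (LEAST j. bodd m * 2 ^ j \<ge> n + 1)"

definition kpart :: "nat \<Rightarrow> nat \<Rightarrow> nat" where
  "kpart m n =
     (if bodd m \<ge> 2 * n then 0
      else if bodd m * 2 ^ j0 m n < 2 * n then 2 ^ (jpow m - j0 m n)
      else 0)"

definition kset :: "nat set \<Rightarrow> nat \<Rightarrow> nat" where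
  "kset rho n = (\<Sum>m\<in>rho. kpart m n)"

definition kbar :: "marked_op \<Rightarrow> nat" where
  "kbar x = (case x of (p1, p2, j) \<Rightarrow>
      count p1 (spart p1) - j + kset p2 (spart p1))"

definition sptcrank :: "marked_op \<Rightarrow> int" where
  "sptcrank x = (case x of (p1, p2, j) \<Rightarrow>
      (let k = kbar x in
       if k > 0 then int (size (filter_mset (\<lambda>y. spart p1 + k \<le> y) p1)) - int k
       else int (size p1) - 1))"

definition SPbar :: "(nat multiset \<times> nat multiset) set" where
  "SPbar = {(l1, l2). is_partition l1 \<and> is_partition l2 \<and> l1 \<noteq> {#} \<and>
       (\<forall>y\<in>#l2. spart l1 \<le> y) \<and>
       (\<forall>y\<in>#l2. y \<ge> 2 * spart l1 + 1 \<longrightarrow> odd y)}"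

definition sp_weight :: "nat multiset \<times> nat multiset \<Rightarrow> nat" where
  "sp_weight l = sum_mset (fst l) + sum_mset (snd l)"

definition ksp :: "nat multiset \<times> nat multiset \<Rightarrow> nat" where
  "ksp l = size (filter_mset (\<lambda>y. spart (fst l) \<le> y \<and> y \<le> 2 * spart (fst l) - 1) (snd l))"

definition crank_bar :: "nat multiset \<times> nat multiset \<Rightarrow> int" where
  "crank_bar l =
     (let k = ksp l; l1 = fst l in
      if k > 0 then int (size (filter_mset (\<lambda>y. spart l1 + k \<le> y) l1)) - int k
      else int (size l1) - 1)"

end

theory Submission
  imports Defs
begin

text \<open>The smallest part \<open>s\<close> of \<open>\<pi>\<^sub>1\<close> stays in \<open>\<lambda>\<^sub>1\<close> exactly \<open>j\<close> times; the
  other \<open>\<nu> - j\<close> copies move to \<open>\<lambda>\<^sub>2\<close>. Each overlined part \<open>m > s\<close> is uniquely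
  \<open>p * 2 ^ t\<close> with \<open>s < p\<close> and (\<open>p \<le> 2 * s\<close> or \<open>p\<close> odd), and is replaced by \<open>2 ^ t\<close>
  copies of \<open>p\<close>; as the overlined parts are distinct, the binary expansion of the
  multiplicity of \<open>p\<close> in \<open>\<lambda>\<^sub>2\<close> recovers them. This preserves the weight, the copies
  of parts \<open>p < 2 * s\<close> produced from \<open>m\<close> are exactly the \<open>k(m, s)\<close> counted by \<open>k\<close>-bar,
  and \<open>\<lambda>\<^sub>1\<close> agrees with \<open>\<pi>\<^sub>1\<close> above \<open>s\<close>, which gives the crank identity.\<close>

lemma sum_pow2_eq_horner_sum:
  assumes "T \<subseteq> {..<N}"
  shows "(\<Sum>t\<in>T. 2 ^ t :: nat) = horner_sum of_bool 2 (map (\<lambda>k. k \<in> T) [0..<N])"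
proof -
  have "(\<Sum>t\<in>T. 2 ^ t :: nat) = (\<Sum>k\<in>{..<N}. of_bool (k \<in> T) * 2 ^ k)"
    using assms by (simp add: sum.If_cases Int_absorb1)
  also have "\<dots> = horner_sum of_bool 2 (map (\<lambda>k. k \<in> T) [0..<N])"
    by (simp add: horner_sum_eq_sum atLeast0LessThan)
  finally show ?thesis .
qed

lemma bit_sum_pow2_iff:
  assumes "finite T"
  shows "bit (\<Sum>t\<in>T. 2 ^ t :: nat) n \<longleftrightarrow> n \<in> T"
proof -
  obtain N where "T \<subseteq> {..<N}" and "n < N"
    using assms finite_nat_set_iff_bounded[of "insert n T"] by auto
  then show ?thesis by (simp add: sum_pow2_eq_horner_sum bit_horner_sum_bit_iff)
qed

lemma bit_nat_imp_less:
  assumes "bit (c :: nat) t"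
  shows "t < c"
  using assms bit_take_bit_iff[of c c t] take_bit_nat_eq_self_iff[of c c] by simp

lemma finite_bit_nat: "finite {t. bit (c :: nat) t}"
  by (rule finite_subset[of _ "{..<c}"]) (auto dest: bit_nat_imp_less)

lemma sum_pow2_bit_nat: "(\<Sum>t | bit (c :: nat) t. 2 ^ t) = c"
proof -
  have "{t. bit c t} \<subseteq> {..<c}" by (auto dest: bit_nat_imp_less)
  then have "(\<Sum>t | bit c t. 2 ^ t) = take_bit c c"
    by (simp add: sum_pow2_eq_horner_sum flip: horner_sum_bit_eq_take_bit)
  also have "\<dots> = c" by (simp add: take_bit_nat_eq_self_iff)
  finally show ?thesis .
qed

lemma bodd_times_pow2_jpow: "bodd m * 2 ^ jpow m = m"
  by (simp add: bodd_def jpow_def multiplicity_dvd)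

lemma odd_bodd: "m > 0 \<Longrightarrow> odd (bodd m)"
  using multiplicity_decompose[of m 2] by (simp add: bodd_def jpow_def)

lemma
  assumes "odd b"
  shows jpow_odd_times_pow2: "jpow (b * 2 ^ k) = k"
    and bodd_odd_times_pow2: "bodd (b * 2 ^ k) = b"
proof -
  have "multiplicity 2 (b * 2 ^ k) = k"
    using assms multiplicity_prime_elem_times_other[of 2 b "2 ^ k"] by simp
  then show "jpow (b * 2 ^ k) = k" by (simp add: jpow_def)
  then show "bodd (b * 2 ^ k) = b" by (simp add: bodd_def)
qed

lemma
  assumes "s < m"
  shows s_less_bodd_times_pow2_j0: "s < bodd m * 2 ^ j0 m s"
    and j0_le_jpow: "j0 m s \<le> jpow m"
    and less_j0_imp_le: "j < j0 m s \<Longrightarrow> bodd m * 2 ^ j \<le> s"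
proof -
  have witness: "s + 1 \<le> bodd m * 2 ^ jpow m"
    using assms by (simp add: bodd_times_pow2_jpow)
  show "s < bodd m * 2 ^ j0 m s"
    using LeastI[of "\<lambda>j. s + 1 \<le> bodd m * 2 ^ j", OF witness] by (simp add: j0_def)
  show "j0 m s \<le> jpow m"
    unfolding j0_def using witness by (rule Least_le)
  show "j < j0 m s \<Longrightarrow> bodd m * 2 ^ j \<le> s"
    using not_less_Least[of j "\<lambda>j. s + 1 \<le> bodd m * 2 ^ j"] by (simp add: j0_def)
qed

text \<open>Every \<open>m > s\<close> is uniquely \<open>p * 2 ^ t\<close> with \<open>p \<in> base_parts s\<close>: \<open>p\<close> is the
  first of \<open>bodd m, 2 * bodd m, 4 * bodd m, \<dots>\<close> to exceed \<open>s\<close>, i.e. \<open>bodd m * 2 ^ j0 m s\<close>.\<close>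

definition base_parts :: "nat \<Rightarrow> nat set" where
  "base_parts s = {p. s < p \<and> (p \<le> 2 * s \<or> odd p)}"

definition base_part :: "nat \<Rightarrow> nat \<Rightarrow> nat" where
  "base_part s m = bodd m * 2 ^ j0 m s"

definition base_exp :: "nat \<Rightarrow> nat \<Rightarrow> nat" where
  "base_exp s m = jpow m - j0 m s"

lemma
  assumes "s < m"
  shows base_part_in_base_parts: "base_part s m \<in> base_parts s"
    and base_part_times_pow2_base_exp: "base_part s m * 2 ^ base_exp s m = m"
proof -
  show "base_part s m * 2 ^ base_exp s m = m"
    using j0_le_jpow[OF assms] bodd_times_pow2_jpow[of m]
    by (simp add: base_part_def base_exp_def mult.assoc flip: power_add)
  have "base_part s m \<le> 2 * s \<or> odd (base_part s m)"
  proof (cases "j0 m s")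
    case 0
    then show ?thesis using assms odd_bodd[of m] by (simp add: base_part_def)
  next
    case (Suc j)
    then show ?thesis using less_j0_imp_le[OF assms, of j] by (simp add: base_part_def)
  qed
  then show "base_part s m \<in> base_parts s"
    using s_less_bodd_times_pow2_j0[OF assms] by (simp add: base_parts_def base_part_def)
qed

lemma
  assumes "p \<in> base_parts s"
  shows base_part_mult_pow2: "base_part s (p * 2 ^ t) = p"
    and base_exp_mult_pow2: "base_exp s (p * 2 ^ t) = t"
proof -
  define b i where "b = bodd p" and "i = jpow p"
  have p: "p = b * 2 ^ i" and "odd b"
    using assms bodd_times_pow2_jpow[of p] odd_bodd[of p] by (auto simp: b_def i_def base_parts_def)
  then have m: "p * 2 ^ t = b * 2 ^ (i + t)" by (simp add: power_add)
  have j0: "j0 (p * 2 ^ t) s = i"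
    unfolding j0_def m bodd_odd_times_pow2[OF \<open>odd b\<close>]
  proof (rule Least_equality)
    show "s + 1 \<le> b * 2 ^ i" using assms p by (simp add: base_parts_def)
  next
    fix j assume j: "s + 1 \<le> b * 2 ^ j"
    show "i \<le> j"
    proof (rule ccontr)
      assume "\<not> i \<le> j"
      then obtain i' where i': "i = Suc i'" "j \<le> i'" by (cases i) auto
      \<comment> \<open>then \<open>p\<close> is even, hence \<open>p \<le> 2 * s\<close>\<close>
      then have "b * 2 ^ i' \<le> s" using assms p by (simp add: base_parts_def)
      moreover have "b * 2 ^ j \<le> b * 2 ^ i'" using i' by simp
      ultimately show False using j by simp
    qed
  qed
  show "base_part s (p * 2 ^ t) = p" "base_exp s (p * 2 ^ t) = t"
    unfolding base_part_def base_exp_def j0 unfolding m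
    using p by (simp_all add: jpow_odd_times_pow2 bodd_odd_times_pow2 \<open>odd b\<close>)
qed

lemma kpart_eq_base_part:
  assumes "s < m"
  shows "kpart m s = (if base_part s m < 2 * s then 2 ^ base_exp s m else 0)"
proof (cases "bodd m \<ge> 2 * s")
  case True
  moreover have "bodd m \<le> base_part s m" by (simp add: base_part_def)
  ultimately have "\<not> base_part s m < 2 * s" by linarith
  then show ?thesis using True by (simp add: kpart_def)
next
  case False
  then show ?thesis by (simp add: kpart_def base_part_def base_exp_def)
qed

definition split_parts :: "nat \<Rightarrow> nat set \<Rightarrow> nat multiset" where
  "split_parts s A = (\<Sum>m\<in>A. replicate_mset (2 ^ base_exp s m) (base_part s m))"

definition merge_parts :: "nat \<Rightarrow> nat multiset \<Rightarrow> nat set" where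
  "merge_parts s M = {m. s < m \<and> bit (count M (base_part s m)) (base_exp s m)}"

lemma filter_replicate_mset:
  "filter_mset P (replicate_mset n x) = (if P x then replicate_mset n x else {#})"
  by (induction n) auto

lemma count_split_parts:
  assumes "finite A" "A \<subseteq> {s<..}" "p \<in> base_parts s"
  shows "count (split_parts s A) p = (\<Sum>t | p * 2 ^ t \<in> A. 2 ^ t)"
proof -
  have "count (split_parts s A) p = (\<Sum>m | m \<in> A \<and> base_part s m = p. 2 ^ base_exp s m)"
    unfolding split_parts_def count_sum using assms(1)
    by (simp add: sum.inter_filter eq_commute)
  also have "{m. m \<in> A \<and> base_part s m = p} = (\<lambda>t. p * 2 ^ t) ` {t. p * 2 ^ t \<in> A}"
  proof (intro equalityI subsetI)
    fix m assume "m \<in> {m. m \<in> A \<and> base_part s m = p}"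
    then have "m \<in> A" "base_part s m = p" by auto
    moreover from \<open>m \<in> A\<close> have "s < m" using assms(2) by auto
    ultimately show "m \<in> (\<lambda>t. p * 2 ^ t) ` {t. p * 2 ^ t \<in> A}"
      using base_part_times_pow2_base_exp[of s m] by (intro image_eqI[where x = "base_exp s m"]) auto
  qed (use assms(3) base_part_mult_pow2 in auto)
  also have "(\<Sum>m \<in> (\<lambda>t. p * 2 ^ t) ` {t. p * 2 ^ t \<in> A}. 2 ^ base_exp s m) =
      (\<Sum>t | p * 2 ^ t \<in> A. 2 ^ t)"
    using assms(3) by (subst sum.reindex) (auto simp: inj_on_def base_parts_def base_exp_mult_pow2)
  finally show ?thesis .
qed

lemma set_mset_split_parts:
  assumes "A \<subseteq> {s<..}"
  shows "set_mset (split_parts s A) \<subseteq> base_parts s"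
proof (cases "finite A")
  case True
  then show ?thesis
    using assms base_part_in_base_parts by (auto simp: split_parts_def set_mset_sum)
qed (simp add: split_parts_def)

lemma sum_mset_split_parts:
  assumes "A \<subseteq> {s<..}"
  shows "sum_mset (split_parts s A) = \<Sum>A"
  unfolding split_parts_def sum_comp_morphism[of sum_mset, symmetric, simplified]
proof (rule sum.cong)
  fix m assume "m \<in> A"
  then show "sum_mset (replicate_mset (2 ^ base_exp s m) (base_part s m)) = m"
    using assms base_part_times_pow2_base_exp[of s m] by (auto simp: mult.commute)
qed simp

lemma size_filter_split_parts:
  assumes "A \<subseteq> {s<..}"
  shows "size (filter_mset (\<lambda>y. s \<le> y \<and> y \<le> 2 * s - 1) (split_parts s A)) = kset A s"
  unfolding split_parts_def kset_def
    sum_comp_morphism[of "filter_mset _", symmetric, simplified]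
    size_multiset_sum
proof (rule sum.cong)
  fix m assume "m \<in> A"
  then have "s < m" "s < base_part s m"
    using assms base_part_in_base_parts[of s m] by (auto simp: base_parts_def)
  then show "size (filter_mset (\<lambda>y. s \<le> y \<and> y \<le> 2 * s - 1)
      (replicate_mset (2 ^ base_exp s m) (base_part s m))) = kpart m s"
    by (auto simp: kpart_eq_base_part filter_replicate_mset)
qed simp

lemma merge_parts_subset: "merge_parts s M \<subseteq> {s<..}"
  by (auto simp: merge_parts_def)

lemma finite_merge_parts: "finite (merge_parts s M)"
proof (rule finite_subset)
  show "merge_parts s M \<subseteq> (\<lambda>(p, t). p * 2 ^ t) ` (SIGMA p:set_mset M. {t. bit (count M p) t})"
  proof
    fix m assume m: "m \<in> merge_parts s M"
    then have "base_part s m \<in># M"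
      by (auto simp: merge_parts_def count_eq_zero_iff[symmetric] intro: ccontr)
    with m show "m \<in> (\<lambda>(p, t). p * 2 ^ t) ` (SIGMA p:set_mset M. {t. bit (count M p) t})"
      using base_part_times_pow2_base_exp[of s m]
      by (auto simp: merge_parts_def intro!: image_eqI[of _ _ "(base_part s m, base_exp s m)"])
  qed
qed (simp add: finite_bit_nat)

lemma merge_split_parts:
  assumes "finite A" "A \<subseteq> {s<..}"
  shows "merge_parts s (split_parts s A) = A"
proof (intro set_eqI)
  fix m
  show "m \<in> merge_parts s (split_parts s A) \<longleftrightarrow> m \<in> A"
  proof (cases "s < m")
    case True
    then have "count (split_parts s A) (base_part s m) =
        (\<Sum>t | base_part s m * 2 ^ t \<in> A. 2 ^ t)"
      using assms base_part_in_base_parts by (simp add: count_split_parts)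
    moreover have "finite {t. base_part s m * 2 ^ t \<in> A}"
      using True base_part_in_base_parts[of s m] assms(1)
      by (intro finite_vimageI[of A "\<lambda>t. base_part s m * 2 ^ t", unfolded vimage_def])
        (auto simp: inj_on_def base_parts_def)
    ultimately show ?thesis
      using True base_part_times_pow2_base_exp[of s m] by (simp add: merge_parts_def bit_sum_pow2_iff)
  qed (use assms(2) in \<open>auto simp: merge_parts_def\<close>)
qed

lemma split_merge_parts:
  "split_parts s (merge_parts s M) = filter_mset (\<lambda>p. p \<in> base_parts s) M"
proof (rule multiset_eqI)
  fix p
  show "count (split_parts s (merge_parts s M)) p = count (filter_mset (\<lambda>p. p \<in> base_parts s) M) p"
  proof (cases "p \<in> base_parts s")
    case True
    have "s < p * 2 ^ t" for t
    proof (rule less_le_trans)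
      show "s < p" using True by (simp add: base_parts_def)
    qed simp
    then have bits: "{t. p * 2 ^ t \<in> merge_parts s M} = {t. bit (count M p) t}"
      using True by (simp add: merge_parts_def base_part_mult_pow2 base_exp_mult_pow2)
    have "count (split_parts s (merge_parts s M)) p = (\<Sum>t | p * 2 ^ t \<in> merge_parts s M. 2 ^ t)"
      by (rule count_split_parts[OF finite_merge_parts merge_parts_subset True])
    also have "\<dots> = count M p"
      using bits sum_pow2_bit_nat by simp
    finally show ?thesis using True by simp
  next
    case False
    then show ?thesis
      using set_mset_split_parts[of "merge_parts s M" s]
      by (auto simp: merge_parts_def count_eq_zero_iff)
  qed
qed

lemma spart_in: "p \<noteq> {#} \<Longrightarrow> spart p \<in># p"
  unfolding spart_def by (intro Min_in) auto

lemma spart_le: "y \<in># p \<Longrightarrow> spart p \<le> y"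
  unfolding spart_def by (intro Min_le) auto

lemma spart_pos: "is_partition p \<Longrightarrow> p \<noteq> {#} \<Longrightarrow> 0 < spart p"
  using spart_in by (auto simp: is_partition_def)

lemma spart_eqI: "s \<in># p \<Longrightarrow> (\<And>y. y \<in># p \<Longrightarrow> s \<le> y) \<Longrightarrow> spart p = s"
  unfolding spart_def by (intro Min_eqI) auto

lemma spart_add_replicate_spart:
  "p \<noteq> {#} \<Longrightarrow> spart (p + replicate_mset n (spart p)) = spart p"
  by (rule spart_eqI) (auto simp: spart_in spart_le split: if_splits)

lemma spart_diff_replicate_spart:
  assumes "n < count p (spart p)"
  shows "spart (p - replicate_mset n (spart p)) = spart p"
proof (rule spart_eqI)
  show "spart p \<in># p - replicate_mset n (spart p)"
    using assms by (simp flip: count_greater_zero_iff)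
qed (auto simp: spart_le dest: in_diffD)

definition mop_to_sp :: "marked_op \<Rightarrow> nat multiset \<times> nat multiset" where
  "mop_to_sp x = (case x of (p1, p2, j) \<Rightarrow>
     (p1 - replicate_mset (count p1 (spart p1) - j) (spart p1),
      replicate_mset (count p1 (spart p1) - j) (spart p1) + split_parts (spart p1) p2))"

text \<open>The copies of \<open>spart l1\<close> in \<open>l2\<close> are invisible to \<open>merge_parts\<close>, which only reads
  multiplicities of base parts.\<close>

definition sp_to_mop :: "nat multiset \<times> nat multiset \<Rightarrow> marked_op" where
  "sp_to_mop l = (case l of (l1, l2) \<Rightarrow>
     (l1 + replicate_mset (count l2 (spart l1)) (spart l1),
      merge_parts (spart l1) l2,
      count l1 (spart l1)))"

context
  fixes p1 :: "nat multiset" and p2 :: "nat set" and j :: nat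
  assumes mop: "(p1, p2, j) \<in> marked_overpartitions"
begin

lemma spart_fst_mop_to_sp: "spart (fst (mop_to_sp (p1, p2, j))) = spart p1"
proof -
  have "count p1 (spart p1) - j < count p1 (spart p1)"
    using mop by (intro diff_less) (auto simp: marked_overpartitions_def spart_in)
  then show ?thesis by (simp add: mop_to_sp_def spart_diff_replicate_spart)
qed

lemma count_fst_mop_to_sp:
  "count (fst (mop_to_sp (p1, p2, j))) y = (if y = spart p1 then j else count p1 y)"
  using mop by (simp add: mop_to_sp_def marked_overpartitions_def)

lemma mop_to_sp_in_SPbar: "mop_to_sp (p1, p2, j) \<in> SPbar"
proof -
  define s where "s = spart p1"
  have s_pos: "0 < s" and p2: "p2 \<subseteq> {s<..}"
    using mop spart_pos by (auto simp: marked_overpartitions_def s_def)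
  obtain l1 l2 where l: "mop_to_sp (p1, p2, j) = (l1, l2)" by fastforce
  have "spart l1 = s" "count l1 s = j"
    using spart_fst_mop_to_sp count_fst_mop_to_sp[of s] by (simp_all add: l s_def)
  moreover have "is_partition l1"
    using mop l by (auto simp: mop_to_sp_def marked_overpartitions_def is_partition_def dest: in_diffD)
  moreover have "l1 \<noteq> {#}"
    using mop \<open>count l1 s = j\<close> by (auto simp: marked_overpartitions_def)
  moreover have "y = s \<or> y \<in> base_parts s" if "y \<in># l2" for y
    using that l set_mset_split_parts[OF p2] by (auto simp: mop_to_sp_def s_def split: if_splits)
  then have "s \<le> y \<and> (2 * s + 1 \<le> y \<longrightarrow> odd y)" if "y \<in># l2" for y
    using that by (fastforce simp: base_parts_def)
  moreover from this have "is_partition l2"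
    using s_pos by (fastforce simp: is_partition_def)
  ultimately show ?thesis
    by (simp add: l SPbar_def)
qed

lemma sp_weight_mop_to_sp: "sp_weight (mop_to_sp (p1, p2, j)) = mop_weight (p1, p2, j)"
proof -
  define s c where "s = spart p1" and "c = count p1 s - j"
  have p2: "p2 \<subseteq> {s<..}" using mop by (auto simp: marked_overpartitions_def s_def)
  have "replicate_mset c s \<subseteq># p1" by (simp add: c_def flip: count_le_replicate_mset_subset_eq)
  then have "sum_mset (p1 - replicate_mset c s) + sum_mset (replicate_mset c s) = sum_mset p1"
    by (metis subset_mset.diff_add sum_mset.union)
  then show ?thesis
    using sum_mset_split_parts[OF p2]
    by (simp add: sp_weight_def mop_weight_def mop_to_sp_def s_def c_def)
qed

lemma ksp_mop_to_sp: "ksp (mop_to_sp (p1, p2, j)) = kbar (p1, p2, j)"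
proof -
  define s where "s = spart p1"
  have s_pos: "0 < s" and p2: "p2 \<subseteq> {s<..}"
    using mop spart_pos by (auto simp: marked_overpartitions_def s_def)
  show ?thesis
    using size_filter_split_parts[OF p2] s_pos spart_fst_mop_to_sp
    by (simp add: ksp_def kbar_def mop_to_sp_def filter_replicate_mset s_def)
qed

lemma crank_bar_mop_to_sp: "crank_bar (mop_to_sp (p1, p2, j)) = sptcrank (p1, p2, j)"
proof (cases "kbar (p1, p2, j) > 0")
  case True
  then have "filter_mset (\<lambda>y. spart p1 + kbar (p1, p2, j) \<le> y) (fst (mop_to_sp (p1, p2, j))) =
      filter_mset (\<lambda>y. spart p1 + kbar (p1, p2, j) \<le> y) p1"
    by (intro multiset_eqI) (simp add: count_fst_mop_to_sp)
  then show ?thesis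
    using True by (simp add: crank_bar_def sptcrank_def ksp_mop_to_sp spart_fst_mop_to_sp)
next
  case False
  then have "fst (mop_to_sp (p1, p2, j)) = p1"
    by (simp add: kbar_def mop_to_sp_def)
  then show ?thesis
    using False by (simp add: crank_bar_def sptcrank_def ksp_mop_to_sp)
qed

lemma sp_to_mop_mop_to_sp: "sp_to_mop (mop_to_sp (p1, p2, j)) = (p1, p2, j)"
proof -
  define s where "s = spart p1"
  have p2: "finite p2" "p2 \<subseteq> {s<..}"
    using mop by (auto simp: marked_overpartitions_def s_def)
  obtain l1 l2 where l: "mop_to_sp (p1, p2, j) = (l1, l2)" by fastforce
  then have l2: "l2 = replicate_mset (count p1 s - j) s + split_parts s p2"
    by (simp add: mop_to_sp_def s_def)
  have sl1: "spart l1 = s" and cl1: "count l1 = (\<lambda>y. if y = s then j else count p1 y)"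
    using spart_fst_mop_to_sp count_fst_mop_to_sp by (simp_all add: l s_def fun_eq_iff)
  have "s \<notin># split_parts s p2"
    using set_mset_split_parts[OF p2(2)] by (auto simp: base_parts_def)
  then have cl2: "count l2 s = count p1 s - j"
    by (simp add: l2 not_in_iff)
  have "j \<le> count p1 s"
    using mop by (simp add: marked_overpartitions_def s_def)
  then have "l1 + replicate_mset (count l2 s) s = p1"
    by (intro multiset_eqI) (simp add: cl1 cl2)
  moreover have "count l2 (base_part s m) = count (split_parts s p2) (base_part s m)" if "s < m" for m
    using base_part_in_base_parts[OF that] by (simp add: l2 base_parts_def)
  then have "merge_parts s l2 = merge_parts s (split_parts s p2)"
    by (auto simp: merge_parts_def)
  ultimately show ?thesis
    using merge_split_parts[OF p2] by (simp add: sp_to_mop_def l sl1 cl1)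
qed

end

context
  fixes l1 l2 :: "nat multiset"
  assumes sp: "(l1, l2) \<in> SPbar"
begin

lemma sp_to_mop_in_marked_overpartitions: "sp_to_mop (l1, l2) \<in> marked_overpartitions"
proof -
  have "0 < count l1 (spart l1)"
    using sp spart_in by (simp add: SPbar_def)
  then show ?thesis
    using sp spart_pos[of l1] spart_add_replicate_spart[of l1] merge_parts_subset[of "spart l1" l2]
    by (auto simp: sp_to_mop_def marked_overpartitions_def SPbar_def is_partition_def
        finite_merge_parts)
qed

lemma mop_to_sp_sp_to_mop: "mop_to_sp (sp_to_mop (l1, l2)) = (l1, l2)"
proof -
  define s where "s = spart l1"
  have "spart (l1 + replicate_mset (count l2 s) s) = s"
    using sp spart_add_replicate_spart by (simp add: SPbar_def s_def)
  moreover have "filter_mset (\<lambda>p. p \<in> base_parts s) l2 = filter_mset (\<lambda>p. s < p) l2"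
    using sp by (intro filter_mset_cong) (auto simp: SPbar_def base_parts_def s_def)
  moreover have "count l2 y = 0" if "y < s" for y
    using sp that by (auto simp: SPbar_def s_def count_eq_zero_iff)
  then have "replicate_mset (count l2 s) s + filter_mset (\<lambda>p. s < p) l2 = l2"
    by (intro multiset_eqI) (auto simp: not_less_iff_gr_or_eq)
  ultimately show ?thesis
    by (simp add: mop_to_sp_def sp_to_mop_def split_merge_parts s_def)
qed

end

theorem mainTheorem16:
  shows "\<exists>\<Phi>. bij_betw \<Phi> marked_overpartitions SPbar \<and>
    (\<forall>x\<in>marked_overpartitions.
       sp_weight (\<Phi> x) = mop_weight x \<and>
       kbar x = ksp (\<Phi> x) \<and>
       sptcrank x = crank_bar (\<Phi> x))"
proof (intro exI conjI ballI)
  show "bij_betw mop_to_sp marked_overpartitions SPbar"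
  proof (rule bij_betw_byWitness[where f' = sp_to_mop])
    show "\<forall>x\<in>marked_overpartitions. sp_to_mop (mop_to_sp x) = x"
      using sp_to_mop_mop_to_sp by auto
    show "\<forall>l\<in>SPbar. mop_to_sp (sp_to_mop l) = l"
      using mop_to_sp_sp_to_mop by auto
    show "mop_to_sp ` marked_overpartitions \<subseteq> SPbar"
      using mop_to_sp_in_SPbar by auto
    show "sp_to_mop ` SPbar \<subseteq> marked_overpartitions"
      using sp_to_mop_in_marked_overpartitions by auto
  qed
next
  fix x assume "x \<in> marked_overpartitions"
  moreover obtain p1 p2 j where "x = (p1, p2, j)" by (cases x)
  ultimately show "sp_weight (mop_to_sp x) = mop_weight x"
    and "kbar x = ksp (mop_to_sp x)"
    and "sptcrank x = crank_bar (mop_to_sp x)"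
    by (simp_all add: sp_weight_mop_to_sp ksp_mop_to_sp crank_bar_mop_to_sp)
qed

end
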